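(* Let $X$ be a finite nonempty alphabet and $\mathcal{L}\subseteq 2^{X^*}$ a nontrivial, WP-recursive language family closed under finite unions, finite intersections and complementation. Let $(C,\mathbf{A})$ be a conditional classification problem with $\mathbf{A}=(A_1,\dots,A_k)$, $C$ recursive, and for each $1\le i\le k$: $A_i$ recursive and $A_i\notin\mathit{cclass}_1(C,\mathcal{L})$. Then there exists $\mathbf{B}=(B_1,\dots,B_k)$ with $\mathbf{B}\le\mathbf{A}$, $\mathbf{B}\in\mathit{ccore}_k(C,\mathcal{L})$, and each $B_i$ recursive.
   Context: $\mathcal{L}$ is nontrivial if $\emptyset,X^*\in\mathcal{L}$ and for all $Q\in\mathcal{L}$ and finite $E\subseteq X^*$ both $Q\cup E\in\mathcal{L}$ and $Q\setminus E\in\mathcal{L}$. $\mathcal{L}$ is WP-recursive if there is a surjection $e:\mathbb{N}_0\to\mathcal{L}$ such that the predicate "$w\in e(i)$" (for $i\in\mathbb{N}_0$, $w\in X^*$) is decidable uniformly in $i,w$. A classification problem is a vector $(A_1,\dots,A_k)$, $k\ge1$, of pairwise disjoint infinite subsets of $X^*$, of length $k$. A conditional classification problem is a pair $(C,\mathbf{A})$ with $C\subseteq X^*$, $\mathbf{A}$ a classification problem and $C$ disjoint from all components of $\mathbf{A}$. For vectors $\mathbf{B}=(B_1,\dots,B_m)$, $\mathbf{Q}=(Q_1,\dots,Q_k)$, $\mathbf{B}\le\mathbf{Q}$ means $1\le m\le k$ and there is an injective $\sigma:\{1,\dots,m\}\to\{1,\dots,k\}$ with $B_i\subseteq Q_{\sigma(i)}$.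 An $\mathcal{L}$-partition is a vector of pairwise disjoint members of $\mathcal{L}$ whose union is $X^*$. $\mathit{cclass}_k(C,\mathcal{L})$ is the set of classification problems $\mathbf{A}$ of length $k$ such that $(C,\mathbf{A})$ is a conditional classification problem and there is an $\mathcal{L}$-partition $(Q_0,Q_1,\dots,Q_k)$ with $C\subseteq Q_0$ and $\mathbf{A}\le(Q_1,\dots,Q_k)$ (a single set $A$ is identified with $(A)$). $\mathit{ccore}_k(C,\mathcal{L})$ is the set of classification problems $\mathbf{A}$ of length $k$ with $(C,\mathbf{A})$ a conditional classification problem such that every classification problem $\mathbf{A}'\le\mathbf{A}$ (any length $\ge1$) satisfies $\mathbf{A}'\notin\mathit{cclass}_{|\mathbf{A}'|}(C,\mathcal{L})$. *)

theory Defs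
  imports Main "HOL-Library.Nat_Bijection"
begin

datatype recf = Zero | Succ | Proj nat | Comp recf "recf list" | Prim recf recf | Mn recf

inductive evalr :: "recf \<Rightarrow> nat list \<Rightarrow> nat \<Rightarrow> bool" where
  ev_zero: "evalr Zero xs 0"
| ev_succ: "evalr Succ (x # xs) (Suc x)"
| ev_proj: "i < length xs \<Longrightarrow> evalr (Proj i) xs (xs ! i)"
| ev_comp: "list_all2 (\<lambda>g y. evalr g xs y) gs ys \<Longrightarrow> evalr f ys z \<Longrightarrow> evalr (Comp f gs) xs z"
| ev_prim0: "evalr f xs y \<Longrightarrow> evalr (Prim f g) (0 # xs) y"
| ev_primS: "evalr (Prim f g) (n # xs) y \<Longrightarrow> evalr g (n # y # xs) z \<Longrightarrow> evalr (Prim f g) (Suc n # xs) z"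
| ev_mn: "evalr f (n # xs) 0 \<Longrightarrow> (\<forall>m<n. \<exists>y. evalr f (m # xs) y \<and> y > 0) \<Longrightarrow> evalr (Mn f) xs n"

definition computable :: "(nat \<Rightarrow> nat) \<Rightarrow> bool" where
  "computable h \<longleftrightarrow> (\<exists>f. \<forall>n. evalr f [n] (h n))"

definition recursive_set :: "nat set \<Rightarrow> bool" where
  "recursive_set S \<longleftrightarrow> computable (\<lambda>n. if n \<in> S then 1 else 0)"

definition alph_enum :: "'a set \<Rightarrow> 'a \<Rightarrow> nat" where
  "alph_enum X = (SOME e. bij_betw e X {..<card X})"

definition wcode :: "'a set \<Rightarrow> 'a list \<Rightarrow> nat" where
  "wcode X w = list_encode (map (alph_enum X) w)"

definition recursive_lang :: "'a set \<Rightarrow> 'a list set \<Rightarrow> bool" where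
  "recursive_lang X S \<longleftrightarrow> recursive_set (wcode X ` S)"

definition nontrivial :: "'a set \<Rightarrow> 'a list set set \<Rightarrow> bool" where
  "nontrivial X L \<longleftrightarrow> {} \<in> L \<and> lists X \<in> L \<and>
     (\<forall>Q\<in>L. \<forall>E. finite E \<and> E \<subseteq> lists X \<longrightarrow> Q \<union> E \<in> L \<and> Q - E \<in> L)"

definition WP_recursive :: "'a set \<Rightarrow> 'a list set set \<Rightarrow> bool" where
  "WP_recursive X L \<longleftrightarrow> (\<exists>e :: nat \<Rightarrow> 'a list set. range e = L \<and>
     recursive_set {prod_encode (i, wcode X w) | i w. w \<in> lists X \<and> w \<in> e i})"

section \<open>Classification problems (vectors as lists, indexed from 0)\<close>

definition pw_disjoint :: "'b set list \<Rightarrow> bool" where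
  "pw_disjoint A \<longleftrightarrow> (\<forall>i<length A. \<forall>j<length A. i \<noteq> j \<longrightarrow> A ! i \<inter> A ! j = {})"

definition class_problem :: "'a set \<Rightarrow> 'a list set list \<Rightarrow> bool" where
  "class_problem X A \<longleftrightarrow> length A \<ge> 1 \<and> pw_disjoint A \<and>
     (\<forall>i<length A. A ! i \<subseteq> lists X \<and> infinite (A ! i))"

definition cond_class_problem :: "'a set \<Rightarrow> 'a list set \<Rightarrow> 'a list set list \<Rightarrow> bool" where
  "cond_class_problem X C A \<longleftrightarrow> C \<subseteq> lists X \<and> class_problem X A \<and>
     (\<forall>i<length A. C \<inter> A ! i = {})"

definition vec_le :: "'b set list \<Rightarrow> 'b set list \<Rightarrow> bool" where
  "vec_le B Q \<longleftrightarrow> 1 \<le> length B \<and> length B \<le> length Q \<and>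
     (\<exists>\<sigma>. inj_on \<sigma> {..<length B} \<and> \<sigma> ` {..<length B} \<subseteq> {..<length Q} \<and>
          (\<forall>i<length B. B ! i \<subseteq> Q ! (\<sigma> i)))"

definition L_partition :: "'a set \<Rightarrow> 'a list set set \<Rightarrow> 'a list set list \<Rightarrow> bool" where
  "L_partition X L Q \<longleftrightarrow> (\<forall>i<length Q. Q ! i \<in> L) \<and> pw_disjoint Q \<and> \<Union>(set Q) = lists X"

definition cclass :: "'a set \<Rightarrow> 'a list set set \<Rightarrow> nat \<Rightarrow> 'a list set \<Rightarrow> 'a list set list set" where
  "cclass X L k C = {A. length A = k \<and> cond_class_problem X C A \<and>
     (\<exists>Q. length Q = k + 1 \<and> L_partition X L Q \<and> C \<subseteq> Q ! 0 \<and> vec_le A (tl Q))}"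

definition ccore :: "'a set \<Rightarrow> 'a list set set \<Rightarrow> nat \<Rightarrow> 'a list set \<Rightarrow> 'a list set list set" where
  "ccore X L k C = {A. length A = k \<and> cond_class_problem X C A \<and>
     (\<forall>A'. class_problem X A' \<and> vec_le A' A \<longrightarrow> A' \<notin> cclass X L (length A') C)}"

end

theory Submission
  imports Defs "HOL-Library.Infinite_Set"
begin

text \<open>
  Every \<open>A\<^sub>i\<close> meets each member of \<open>\<L>\<close> avoiding \<open>C\<close> in infinitely many words outside it:
  otherwise \<open>A\<^sub>i\<close> would lie, up to finitely many words, in such a member, which together with
  its complement would show \<open>A\<^sub>i \<in> cclass\<^sub>1(C, \<L>)\<close>. Enumerating \<open>\<L>\<close> as \<open>e\<^sub>0, e\<^sub>1, \<dots>\<close>, one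
  picks from \<open>A\<^sub>i\<close> an increasing sequence whose \<open>n\<close>-th element avoids all \<open>e\<^sub>j\<close>, \<open>j \<le> n\<close>,
  disjoint from \<open>C\<close>. The resulting \<open>B\<^sub>i\<close> meets every such \<open>e\<^sub>j\<close> in finitely many words, so no
  infinite subset of \<open>B\<^sub>i\<close> fits into a block of an \<open>\<L>\<close>-partition whose \<open>0\<close>-th block
  contains \<open>C\<close>: this is the core property. Disjointness from \<open>C\<close> is not decidable, but
  it is refuted by a finite witness; searching for the next element together with a bound on
  these witnesses makes the sequence, hence \<open>B\<^sub>i\<close>, recursive.
\<close>

section \<open>Computable functions of several arguments\<close>

definition computable_fn :: "nat \<Rightarrow> (nat list \<Rightarrow> nat) \<Rightarrow> bool" where
  "computable_fn n F \<longleftrightarrow> (\<exists>f. \<forall>xs. length xs = n \<longrightarrow> evalr f xs (F xs))"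

lemma computable_fn_zero: "computable_fn n (\<lambda>_. 0)"
  unfolding computable_fn_def by (auto intro: evalr.intros)

lemma computable_fn_proj: "i < n \<Longrightarrow> computable_fn n (\<lambda>xs. xs ! i)"
  unfolding computable_fn_def by (auto intro: evalr.intros)

lemma computable_fn_Suc: "computable_fn n F \<Longrightarrow> computable_fn n (\<lambda>xs. Suc (F xs))"
  unfolding computable_fn_def
proof (elim exE)
  fix f assume f: "\<forall>xs. length xs = n \<longrightarrow> evalr f xs (F xs)"
  show "\<exists>f. \<forall>xs. length xs = n \<longrightarrow> evalr f xs (Suc (F xs))"
    by (rule exI[of _ "Comp Succ [f]"]) (auto intro!: evalr.intros f[rule_format])
qed

lemma computable_fn_cong:
  "computable_fn n F \<Longrightarrow> (\<And>xs. length xs = n \<Longrightarrow> F xs = G xs) \<Longrightarrow> computable_fn n G"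
  unfolding computable_fn_def by metis

lemma computable_fn_comp:
  assumes G: "computable_fn m G" and len: "length Fs = m" and Fs: "\<forall>F\<in>set Fs. computable_fn n F"
  shows "computable_fn n (\<lambda>xs. G (map (\<lambda>F. F xs) Fs))"
proof -
  obtain g where g: "\<forall>xs. length xs = m \<longrightarrow> evalr g xs (G xs)"
    using G unfolding computable_fn_def by blast
  obtain h where h: "\<forall>F\<in>set Fs. \<forall>xs. length xs = n \<longrightarrow> evalr (h F) xs (F xs)"
    using Fs unfolding computable_fn_def by metis
  show ?thesis unfolding computable_fn_def
  proof (intro exI allI impI)
    fix xs :: "nat list" assume "length xs = n"
    then have "list_all2 (\<lambda>g y. evalr g xs y) (map h Fs) (map (\<lambda>F. F xs) Fs)"
      using h by (auto simp: list_all2_map1 list_all2_map2 list_all2_conv_all_nth)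
    moreover have "evalr g (map (\<lambda>F. F xs) Fs) (G (map (\<lambda>F. F xs) Fs))" using g len by simp
    ultimately show "evalr (Comp g (map h Fs)) xs (G (map (\<lambda>F. F xs) Fs))" by (rule evalr.intros)
  qed
qed

lemma computable_fn_comp1:
  "computable_fn 1 G \<Longrightarrow> computable_fn n F \<Longrightarrow> computable_fn n (\<lambda>xs. G [F xs])"
  using computable_fn_comp[of 1 G "[F]" n] by simp

lemma computable_fn_comp2:
  "computable_fn 2 G \<Longrightarrow> computable_fn n F1 \<Longrightarrow> computable_fn n F2 \<Longrightarrow>
    computable_fn n (\<lambda>xs. G [F1 xs, F2 xs])"
  using computable_fn_comp[of 2 G "[F1, F2]" n] by simp

lemma computable_fn_reindex:
  assumes "computable_fn m G" and "length is = m" and "\<forall>i\<in>set is. i < n"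
  shows "computable_fn n (\<lambda>xs. G (map (nth xs) is))"
proof -
  have "computable_fn n (\<lambda>xs. G (map (\<lambda>F. F xs) (map (\<lambda>i xs. xs ! i) is)))"
    using assms by (intro computable_fn_comp) (auto intro: computable_fn_proj)
  then show ?thesis by (simp add: comp_def)
qed

fun prim_rec :: "(nat list \<Rightarrow> nat) \<Rightarrow> (nat list \<Rightarrow> nat) \<Rightarrow> nat \<Rightarrow> nat list \<Rightarrow> nat" where
  "prim_rec F G 0 xs = F xs"
| "prim_rec F G (Suc k) xs = G (k # prim_rec F G k xs # xs)"

lemma computable_fn_prim_rec:
  assumes F: "computable_fn n F" and G: "computable_fn (Suc (Suc n)) G"
  shows "computable_fn (Suc n) (\<lambda>xs. prim_rec F G (hd xs) (tl xs))"
proof -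
  obtain f where f: "\<forall>xs. length xs = n \<longrightarrow> evalr f xs (F xs)"
    using F unfolding computable_fn_def by blast
  obtain g where g: "\<forall>xs. length xs = Suc (Suc n) \<longrightarrow> evalr g xs (G xs)"
    using G unfolding computable_fn_def by blast
  have eval_Prim: "length ys = n \<Longrightarrow> evalr (Prim f g) (k # ys) (prim_rec F G k ys)" for k ys
    by (induction k) (use f g in \<open>auto intro: evalr.intros\<close>)
  show ?thesis unfolding computable_fn_def
  proof (intro exI allI impI)
    fix xs :: "nat list" assume "length xs = Suc n"
    then obtain k ys where "xs = k # ys" "length ys = n" by (cases xs) auto
    then show "evalr (Prim f g) xs (prim_rec F G (hd xs) (tl xs))" using eval_Prim by simp
  qed
qed

lemma computable_fn_Least_zero:
  assumes F: "computable_fn (Suc n) F" and ex: "\<forall>ys. length ys = n \<longrightarrow> (\<exists>k. F (k # ys) = 0)"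
  shows "computable_fn n (\<lambda>ys. LEAST k. F (k # ys) = 0)"
proof -
  obtain f where f: "\<forall>xs. length xs = Suc n \<longrightarrow> evalr f xs (F xs)"
    using F unfolding computable_fn_def by blast
  show ?thesis unfolding computable_fn_def
  proof (intro exI allI impI)
    fix ys :: "nat list" assume l: "length ys = n"
    let ?L = "LEAST k. F (k # ys) = 0"
    obtain k where "F (k # ys) = 0" using ex l by blast
    then have "F (?L # ys) = 0" by (rule LeastI)
    moreover have "\<exists>y. evalr f (m # ys) y \<and> y > 0" if "m < ?L" for m
      using not_less_Least[OF that] f l by (intro exI[of _ "F (m # ys)"]) auto
    ultimately show "evalr (Mn f) ys ?L" using f l by (metis ev_mn length_Cons)
  qed
qed

lemma computable_fn_add: "computable_fn 2 (\<lambda>xs. xs ! 0 + xs ! 1)"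
proof -
  let ?F = "\<lambda>ys::nat list. ys ! 0" and ?G = "\<lambda>ys::nat list. Suc (ys ! 1)"
  have R: "computable_fn 2 (\<lambda>xs. prim_rec ?F ?G (hd xs) (tl xs))"
    using computable_fn_prim_rec[of 1 ?F ?G]
    by (simp add: computable_fn_proj computable_fn_Suc numeral_2_eq_2)
  have "prim_rec ?F ?G k ys = k + ys ! 0" for k ys by (induction k) auto
  then show ?thesis
    by (intro computable_fn_cong[OF R]) (auto simp: numeral_2_eq_2 length_Suc_conv)
qed

lemma computable_fn_mult: "computable_fn 2 (\<lambda>xs. xs ! 0 * xs ! 1)"
proof -
  let ?F = "\<lambda>ys::nat list. 0" and ?G = "\<lambda>ys::nat list. ys ! 1 + ys ! 2"
  have "computable_fn 3 ?G"
    using computable_fn_comp2[OF computable_fn_add, of 3 "\<lambda>ys. ys ! 1" "\<lambda>ys. ys ! 2"]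
    by (simp add: computable_fn_proj)
  then have R: "computable_fn 2 (\<lambda>xs. prim_rec ?F ?G (hd xs) (tl xs))"
    using computable_fn_prim_rec[of 1 ?F ?G]
    by (simp add: computable_fn_zero numeral_2_eq_2 numeral_3_eq_3)
  have "prim_rec ?F ?G k ys = k * ys ! 0" for k ys by (induction k) auto
  then show ?thesis
    by (intro computable_fn_cong[OF R]) (auto simp: numeral_2_eq_2 length_Suc_conv)
qed

lemma computable_fn_minus_one: "computable_fn 1 (\<lambda>xs. xs ! 0 - 1)"
proof -
  let ?F = "\<lambda>ys::nat list. 0" and ?G = "\<lambda>ys::nat list. ys ! 0"
  have R: "computable_fn 1 (\<lambda>xs. prim_rec ?F ?G (hd xs) (tl xs))"
    using computable_fn_prim_rec[of 0 ?F ?G] by (simp add: computable_fn_zero computable_fn_proj)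
  have "prim_rec ?F ?G k ys = k - 1" for k ys by (induction k) auto
  then show ?thesis by (intro computable_fn_cong[OF R]) (auto simp: length_Suc_conv)
qed

lemma computable_fn_diff: "computable_fn 2 (\<lambda>xs. xs ! 0 - xs ! 1)"
proof -
  let ?F = "\<lambda>ys::nat list. ys ! 0" and ?G = "\<lambda>ys::nat list. ys ! 1 - 1"
  have "computable_fn 3 ?G"
    using computable_fn_comp1[OF computable_fn_minus_one, of 3 "\<lambda>ys. ys ! 1"]
    by (simp add: computable_fn_proj)
  then have R: "computable_fn 2 (\<lambda>xs. prim_rec ?F ?G (hd xs) (tl xs))"
    using computable_fn_prim_rec[of 1 ?F ?G]
    by (simp add: computable_fn_proj numeral_2_eq_2 numeral_3_eq_3)
  have "prim_rec ?F ?G k ys = ys ! 0 - k" for k ys by (induction k) auto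
  then have "computable_fn 2 (\<lambda>xs. xs ! 1 - xs ! 0)"
    by (intro computable_fn_cong[OF R]) (auto simp: numeral_2_eq_2 length_Suc_conv)
  from computable_fn_reindex[OF this, of "[1, 0]" 2] show ?thesis by simp
qed

lemma computable_fn_is_zero: "computable_fn 1 (\<lambda>xs. if xs ! 0 = 0 then 1 else 0)"
proof -
  let ?F = "\<lambda>ys::nat list. 1" and ?G = "\<lambda>ys::nat list. 0"
  have R: "computable_fn 1 (\<lambda>xs. prim_rec ?F ?G (hd xs) (tl xs))"
    using computable_fn_prim_rec[of 0 ?F ?G] computable_fn_Suc[OF computable_fn_zero[of 0]]
    by (simp add: computable_fn_zero)
  have "prim_rec ?F ?G k ys = (if k = 0 then 1 else 0)" for k ys by (cases k) auto
  then show ?thesis by (intro computable_fn_cong[OF R]) (auto simp: length_Suc_conv)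
qed

lemma computable_fn_triangle: "computable_fn 1 (\<lambda>xs. triangle (xs ! 0))"
proof -
  let ?F = "\<lambda>ys::nat list. 0" and ?G = "\<lambda>ys::nat list. ys ! 1 + Suc (ys ! 0)"
  have "computable_fn 2 ?G"
    using computable_fn_comp2[OF computable_fn_add computable_fn_proj[of 1 2]
        computable_fn_Suc[OF computable_fn_proj[of 0 2]]] by simp
  then have R: "computable_fn 1 (\<lambda>xs. prim_rec ?F ?G (hd xs) (tl xs))"
    using computable_fn_prim_rec[of 0 ?F ?G] by (simp add: computable_fn_zero numeral_2_eq_2)
  have "prim_rec ?F ?G k ys = triangle k" for k ys by (induction k) auto
  then show ?thesis by (intro computable_fn_cong[OF R]) (auto simp: length_Suc_conv)
qed

lemma computable_fn_prod_encode: "computable_fn 2 (\<lambda>xs. prod_encode (xs ! 0, xs ! 1))"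
proof -
  have "computable_fn 2 (\<lambda>xs. triangle (xs ! 0 + xs ! 1) + xs ! 0)"
    using computable_fn_comp2[OF computable_fn_add
        computable_fn_comp1[OF computable_fn_triangle computable_fn_add]
        computable_fn_proj[of 0 2]] by simp
  then show ?thesis by (rule computable_fn_cong) (simp add: prod_encode_def)
qed

lemma computable_iff_computable_fn: "computable h \<longleftrightarrow> computable_fn 1 (\<lambda>xs. h (xs ! 0))"
  unfolding computable_def computable_fn_def
proof
  assume "\<exists>f. \<forall>n. evalr f [n] (h n)"
  then obtain f where "\<forall>n. evalr f [n] (h n)" ..
  then show "\<exists>f. \<forall>xs. length xs = 1 \<longrightarrow> evalr f xs (h (xs ! 0))"
    by (intro exI[of _ f]) (auto simp: length_Suc_conv)
next
  assume "\<exists>f. \<forall>xs. length xs = 1 \<longrightarrow> evalr f xs (h (xs ! 0))"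
  then show "\<exists>f. \<forall>n. evalr f [n] (h n)"
    by (metis length_Cons list.size(3) nth_Cons_0 One_nat_def)
qed

definition decidable_pred :: "nat \<Rightarrow> (nat list \<Rightarrow> bool) \<Rightarrow> bool" where
  "decidable_pred n P \<longleftrightarrow> computable_fn n (\<lambda>xs. if P xs then 1 else 0)"

lemma recursive_set_iff_decidable: "recursive_set S \<longleftrightarrow> decidable_pred 1 (\<lambda>xs. xs ! 0 \<in> S)"
  unfolding recursive_set_def decidable_pred_def computable_iff_computable_fn by simp

lemma decidable_pred_cong:
  "decidable_pred n P \<Longrightarrow> (\<And>xs. length xs = n \<Longrightarrow> P xs = Q xs) \<Longrightarrow> decidable_pred n Q"
  unfolding decidable_pred_def by (erule computable_fn_cong) simp

lemma decidable_pred_comp: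
  assumes "decidable_pred m P" "length Fs = m" "\<forall>F\<in>set Fs. computable_fn n F"
  shows "decidable_pred n (\<lambda>xs. P (map (\<lambda>F. F xs) Fs))"
  using computable_fn_comp[of m "\<lambda>xs. if P xs then 1 else 0" Fs n] assms
  unfolding decidable_pred_def by simp

lemma decidable_pred_reindex:
  assumes "decidable_pred m P" and "length is = m" and "\<forall>i\<in>set is. i < n"
  shows "decidable_pred n (\<lambda>xs. P (map (nth xs) is))"
  using computable_fn_reindex[of m "\<lambda>xs. if P xs then 1 else 0" "is" n] assms
  unfolding decidable_pred_def by simp

lemma decidable_mem:
  "recursive_set S \<Longrightarrow> computable_fn n F \<Longrightarrow> decidable_pred n (\<lambda>xs. F xs \<in> S)"
  unfolding recursive_set_iff_decidable decidable_pred_def by (drule computable_fn_comp1) auto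

lemma decidable_not: "decidable_pred n P \<Longrightarrow> decidable_pred n (\<lambda>xs. \<not> P xs)"
  unfolding decidable_pred_def
proof -
  assume "computable_fn n (\<lambda>xs. if P xs then 1 else 0)"
  from computable_fn_comp1[OF computable_fn_is_zero this]
  show "computable_fn n (\<lambda>xs. if \<not> P xs then 1 else 0)" by (rule computable_fn_cong) simp
qed

lemma decidable_conj:
  "decidable_pred n P \<Longrightarrow> decidable_pred n Q \<Longrightarrow> decidable_pred n (\<lambda>xs. P xs \<and> Q xs)"
  unfolding decidable_pred_def
proof -
  assume "computable_fn n (\<lambda>xs. if P xs then 1 else 0)" "computable_fn n (\<lambda>xs. if Q xs then 1 else 0)"
  from computable_fn_comp2[OF computable_fn_mult this]
  show "computable_fn n (\<lambda>xs. if P xs \<and> Q xs then 1 else 0)" by (rule computable_fn_cong) simp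
qed

lemma decidable_less:
  assumes "computable_fn n F" "computable_fn n G"
  shows "decidable_pred n (\<lambda>xs. F xs < G xs)"
proof -
  have "decidable_pred n (\<lambda>xs. G xs - F xs = 0)" unfolding decidable_pred_def
    using computable_fn_comp1[OF computable_fn_is_zero computable_fn_comp2[OF computable_fn_diff]]
      assms by simp
  from decidable_not[OF this] show ?thesis by (rule decidable_pred_cong) auto
qed

lemma decidable_le:
  "computable_fn n F \<Longrightarrow> computable_fn n G \<Longrightarrow> decidable_pred n (\<lambda>xs. F xs \<le> G xs)"
  using decidable_not[OF decidable_less[of n G F]] by (simp add: not_less)

lemma decidable_eq:
  assumes "computable_fn n F" "computable_fn n G"
  shows "decidable_pred n (\<lambda>xs. F xs = G xs)"
proof -
  have "decidable_pred n (\<lambda>xs. F xs \<le> G xs \<and> G xs \<le> F xs)"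
    using assms by (intro decidable_conj decidable_le)
  then show ?thesis by (rule decidable_pred_cong) auto
qed

lemma decidable_all_less_hd:
  assumes P: "decidable_pred (Suc n) P"
  shows "decidable_pred (Suc n) (\<lambda>xs. \<forall>c<hd xs. P (c # tl xs))"
proof -
  let ?F = "\<lambda>ys::nat list. 1::nat"
  let ?G = "\<lambda>xs::nat list. xs ! 1 * (if P (xs ! 0 # drop 2 xs) then 1 else 0)"
  have "map (nth xs) [a..<length xs] = drop a xs" for a and xs :: "nat list"
    by (rule nth_equalityI) auto
  then have map_eq: "map (nth xs) (0 # [2..<Suc (Suc n)]) = xs ! 0 # drop 2 xs"
    if "length xs = Suc (Suc n)" for xs :: "nat list"
    using that by (metis list.simps(9))
  have "decidable_pred (Suc (Suc n)) (\<lambda>xs. P (map (nth xs) (0 # [2..<Suc (Suc n)])))"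
    by (rule decidable_pred_reindex[OF P]) auto
  then have "decidable_pred (Suc (Suc n)) (\<lambda>xs. P (xs ! 0 # drop 2 xs))"
    by (rule decidable_pred_cong) (simp only: map_eq)
  then have "computable_fn (Suc (Suc n)) ?G"
    unfolding decidable_pred_def
    using computable_fn_comp2[OF computable_fn_mult computable_fn_proj[of 1 "Suc (Suc n)"]] by simp
  moreover have "computable_fn n ?F" using computable_fn_Suc[OF computable_fn_zero[of n]] by simp
  ultimately have R: "computable_fn (Suc n) (\<lambda>xs. prim_rec ?F ?G (hd xs) (tl xs))"
    by (intro computable_fn_prim_rec)
  have "prim_rec ?F ?G k ys = (if \<forall>c<k. P (c # ys) then 1 else 0)" for k ys
    by (induction k) (auto simp: less_Suc_eq)
  then show ?thesis unfolding decidable_pred_def by (intro computable_fn_cong[OF R]) simp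
qed

lemma decidable_all_less:
  assumes P: "decidable_pred (Suc n) P" and B: "computable_fn n B"
  shows "decidable_pred n (\<lambda>xs. \<forall>c<B xs. P (c # xs))"
proof -
  have map_nth: "map ((!) xs) [0..<n] = xs" if "length xs = n" for xs :: "nat list"
    using that by (auto intro: nth_equalityI)
  have "decidable_pred n (\<lambda>xs. (\<lambda>ys. \<forall>c<hd ys. P (c # tl ys))
      (map (\<lambda>F. F xs) (B # map (\<lambda>i xs. xs ! i) [0..<n])))"
    by (rule decidable_pred_comp[OF decidable_all_less_hd[OF P]]) (auto intro: B computable_fn_proj)
  then show ?thesis by (rule decidable_pred_cong) (simp add: comp_def map_nth)
qed

lemma decidable_ex_less:
  "decidable_pred (Suc n) P \<Longrightarrow> computable_fn n B \<Longrightarrow> decidable_pred n (\<lambda>xs. \<exists>c<B xs. P (c # xs))"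
  using decidable_not[OF decidable_all_less[OF decidable_not]] by simp

lemma computable_fn_Least:
  assumes P: "decidable_pred (Suc n) P" and ex: "\<And>ys. length ys = n \<Longrightarrow> \<exists>k. P (k # ys)"
  shows "computable_fn n (\<lambda>ys. LEAST k. P (k # ys))"
proof -
  have "computable_fn (Suc n) (\<lambda>xs. if P xs then 0 else 1)"
    using decidable_not[OF P] unfolding decidable_pred_def by (rule computable_fn_cong) auto
  moreover have "\<forall>ys. length ys = n \<longrightarrow> (\<exists>k. (if P (k # ys) then 0 else 1) = (0::nat))"
    using ex by simp
  ultimately have "computable_fn n (\<lambda>ys. LEAST k. (if P (k # ys) then 0 else 1) = (0::nat))"
    by (rule computable_fn_Least_zero)
  then show ?thesis by (simp add: if_split_eq1)
qed

section \<open>An infinite recursive subset almost avoiding the sets disjoint from a given one\<close>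

definition slice :: "nat set \<Rightarrow> nat \<Rightarrow> nat set" where
  "slice W j = {c. prod_encode (j, c) \<in> W}"

locale diagonal_subset =
  fixes SA SC SW :: "nat set"
  assumes recursive_SA: "recursive_set SA"
    and recursive_SC: "recursive_set SC"
    and recursive_SW: "recursive_set SW"
    and infinite_outside: "\<And>n. infinite (SA - \<Union> (slice SW ` {j. j \<le> n \<and> slice SW j \<inter> SC = {}}))"
begin

definition clear_below :: "nat \<Rightarrow> nat \<Rightarrow> bool" where
  "clear_below j m \<longleftrightarrow> (\<forall>c<m. \<not> (c \<in> SC \<and> prod_encode (j, c) \<in> SW))"

text \<open>At stage \<open>n\<close> the slices \<open>j \<le> n\<close> that look disjoint from \<open>SC\<close> when only codes below \<open>m\<close>
  are inspected must be avoided; a too small \<open>m\<close> only excludes more candidates.\<close>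

definition admissible :: "nat \<Rightarrow> nat \<Rightarrow> nat \<Rightarrow> bool" where
  "admissible n m c \<longleftrightarrow> c \<in> SA \<and> (\<forall>j\<le>n. clear_below j m \<longrightarrow> prod_encode (j, c) \<notin> SW)"

text \<open>Requiring \<open>c < m\<close> turns the unbounded search for a pair \<open>(m, c)\<close> into a search for \<open>m\<close>
  with a bounded inner quantifier.\<close>

definition search_bound :: "nat \<Rightarrow> nat \<Rightarrow> nat" where
  "search_bound n low = (LEAST m. \<exists>c<m. low \<le> c \<and> admissible n m c)"

definition next_elem :: "nat \<Rightarrow> nat \<Rightarrow> nat" where
  "next_elem n low = (LEAST c. low \<le> c \<and> admissible n (search_bound n low) c)"

fun diag_seq :: "nat \<Rightarrow> nat" where
  "diag_seq 0 = next_elem 0 0"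
| "diag_seq (Suc k) = next_elem (Suc k) (Suc (diag_seq k))"

lemma clear_below_mono: "clear_below j m \<Longrightarrow> m' \<le> m \<Longrightarrow> clear_below j m'"
  unfolding clear_below_def by auto

lemma clear_below_all_iff: "(\<forall>m. clear_below j m) \<longleftrightarrow> slice SW j \<inter> SC = {}"
proof
  assume clear: "\<forall>m. clear_below j m"
  show "slice SW j \<inter> SC = {}"
  proof (rule ccontr)
    assume "slice SW j \<inter> SC \<noteq> {}"
    then obtain c where "c \<in> SC" "prod_encode (j, c) \<in> SW" by (auto simp: slice_def)
    with clear show False unfolding clear_below_def by (meson lessI)
  qed
qed (auto simp: clear_below_def slice_def)

lemma clear_below_eventually_detects:
  "\<exists>M. \<forall>j\<le>n. slice SW j \<inter> SC \<noteq> {} \<longrightarrow> \<not> clear_below j M"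
proof (induction n)
  case 0
  then show ?case by (metis clear_below_all_iff le_zero_eq)
next
  case (Suc n)
  then obtain M where M: "\<forall>j\<le>n. slice SW j \<inter> SC \<noteq> {} \<longrightarrow> \<not> clear_below j M" ..
  obtain M' where M': "slice SW (Suc n) \<inter> SC \<noteq> {} \<longrightarrow> \<not> clear_below (Suc n) M'"
    using clear_below_all_iff by blast
  have "\<forall>j\<le>Suc n. slice SW j \<inter> SC \<noteq> {} \<longrightarrow> \<not> clear_below j (max M M')"
    using M M' clear_below_mono by (metis le_Suc_eq max.cobounded1 max.cobounded2)
  then show ?case ..
qed

lemma admissible_exists: "\<exists>m c. c < m \<and> low \<le> c \<and> admissible n m c"
proof -
  let ?T = "\<Union> (slice SW ` {j. j \<le> n \<and> slice SW j \<inter> SC = {}})"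
  obtain c where c: "low \<le> c" "c \<in> SA - ?T"
    using infinite_outside[of n] unfolding infinite_nat_iff_unbounded_le by blast
  obtain M where M: "\<forall>j\<le>n. slice SW j \<inter> SC \<noteq> {} \<longrightarrow> \<not> clear_below j M"
    using clear_below_eventually_detects by blast
  have "admissible n (max M (Suc c)) c"
    unfolding admissible_def
  proof (intro conjI allI impI)
    show "c \<in> SA" using c by blast
  next
    fix j assume "j \<le> n" and "clear_below j (max M (Suc c))"
    then have "slice SW j \<inter> SC = {}" using M clear_below_mono by (meson max.cobounded1)
    with \<open>j \<le> n\<close> c show "prod_encode (j, c) \<notin> SW" by (auto simp: slice_def)
  qed
  then show ?thesis using c by (intro exI[of _ "max M (Suc c)"] exI[of _ c]) auto
qed

lemma next_elem_admissible:
  "low \<le> next_elem n low \<and> admissible n (search_bound n low) (next_elem n low)"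
proof -
  obtain m c where "c < m" "low \<le> c" "admissible n m c" using admissible_exists by blast
  then have "\<exists>c<search_bound n low. low \<le> c \<and> admissible n (search_bound n low) c"
    unfolding search_bound_def by (intro LeastI[where P = "\<lambda>m. \<exists>c<m. low \<le> c \<and> admissible n m c"]) blast
  then have "\<exists>c. low \<le> c \<and> admissible n (search_bound n low) c" by blast
  then show ?thesis unfolding next_elem_def by (rule LeastI_ex)
qed

lemma diag_seq_admissible: "\<exists>m. admissible k m (diag_seq k)"
  by (cases k) (use next_elem_admissible in auto)

lemma diag_seq_in: "diag_seq k \<in> SA"
  using diag_seq_admissible[of k] unfolding admissible_def by blast

lemma diag_seq_avoids:
  assumes "slice SW j \<inter> SC = {}" and "j \<le> k"
  shows "diag_seq k \<notin> slice SW j"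
proof -
  obtain m where "admissible k m (diag_seq k)" using diag_seq_admissible by blast
  moreover have "clear_below j m" using assms(1) clear_below_all_iff by blast
  ultimately have "prod_encode (j, diag_seq k) \<notin> SW" using assms(2) unfolding admissible_def by blast
  then show ?thesis by (simp add: slice_def)
qed

lemma diag_seq_less_Suc: "diag_seq k < diag_seq (Suc k)"
  using next_elem_admissible[of "Suc (diag_seq k)" "Suc k"] by simp

lemma strict_mono_diag_seq: "strict_mono diag_seq"
  unfolding strict_mono_Suc_iff using diag_seq_less_Suc by blast

lemma decidable_clear_below: "decidable_pred 2 (\<lambda>xs. clear_below (xs ! 0) (xs ! 1))"
proof -
  have "decidable_pred 3 (\<lambda>xs. xs ! 0 \<in> SC)"
    using decidable_mem[OF recursive_SC computable_fn_proj[of 0 3, simplified]] .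
  moreover have "decidable_pred 3 (\<lambda>xs. prod_encode (xs ! 1, xs ! 0) \<in> SW)"
    using decidable_mem[OF recursive_SW computable_fn_comp2[OF computable_fn_prod_encode
          computable_fn_proj[of 1 3, simplified] computable_fn_proj[of 0 3, simplified]]] by simp
  ultimately have "decidable_pred 3 (\<lambda>xs. \<not> (xs ! 0 \<in> SC \<and> prod_encode (xs ! 1, xs ! 0) \<in> SW))"
    by (rule decidable_not[OF decidable_conj])
  then have "decidable_pred (Suc 2) (\<lambda>xs. \<not> (xs ! 0 \<in> SC \<and> prod_encode (xs ! 1, xs ! 0) \<in> SW))"
    by simp
  from decidable_all_less[OF this computable_fn_proj[of 1 2, simplified]]
  show ?thesis by (rule decidable_pred_cong) (simp add: clear_below_def)
qed

lemma decidable_admissible: "decidable_pred 3 (\<lambda>xs. admissible (xs ! 0) (xs ! 1) (xs ! 2))"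
proof -
  have "decidable_pred 4 (\<lambda>xs. clear_below (xs ! 0) (xs ! 2))"
    using decidable_pred_reindex[OF decidable_clear_below, of "[0, 2]" 4] by simp
  moreover have "decidable_pred 4 (\<lambda>xs. prod_encode (xs ! 0, xs ! 3) \<in> SW)"
    using decidable_mem[OF recursive_SW computable_fn_comp2[OF computable_fn_prod_encode
          computable_fn_proj[of 0 4, simplified] computable_fn_proj[of 3 4, simplified]]] by simp
  ultimately have "decidable_pred 4
      (\<lambda>xs. \<not> (clear_below (xs ! 0) (xs ! 2) \<and> prod_encode (xs ! 0, xs ! 3) \<in> SW))"
    by (intro decidable_not decidable_conj)
  then have "decidable_pred (Suc 3)
      (\<lambda>xs. \<not> (clear_below (xs ! 0) (xs ! 2) \<and> prod_encode (xs ! 0, xs ! 3) \<in> SW))"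
    by simp
  from decidable_all_less[OF this computable_fn_Suc[OF computable_fn_proj[of 0 3, simplified]]]
  have "decidable_pred 3
      (\<lambda>xs. \<forall>j<Suc (xs ! 0). \<not> (clear_below j (xs ! 1) \<and> prod_encode (j, xs ! 2) \<in> SW))"
    by (rule decidable_pred_cong) simp
  from decidable_conj[OF decidable_mem[OF recursive_SA computable_fn_proj[of 2 3, simplified]] this]
  show ?thesis by (rule decidable_pred_cong) (auto simp: admissible_def less_Suc_eq_le)
qed

lemma computable_search_bound: "computable_fn 2 (\<lambda>xs. search_bound (xs ! 0) (xs ! 1))"
proof -
  have "decidable_pred 4 (\<lambda>xs. admissible (xs ! 2) (xs ! 1) (xs ! 0))"
    using decidable_pred_reindex[OF decidable_admissible, of "[2, 1, 0]" 4] by simp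
  then have "decidable_pred (Suc 3) (\<lambda>xs. xs ! 3 \<le> xs ! 0 \<and> admissible (xs ! 2) (xs ! 1) (xs ! 0))"
    using decidable_conj[OF decidable_le[OF computable_fn_proj[of 3 4, simplified] computable_fn_proj[of 0 4, simplified]]]
    by simp
  from decidable_ex_less[OF this computable_fn_proj[of 0 3, simplified]]
  have "decidable_pred 3 (\<lambda>xs. \<exists>c<xs ! 0. xs ! 2 \<le> c \<and> admissible (xs ! 1) (xs ! 0) c)"
    by (rule decidable_pred_cong) simp
  then have "decidable_pred (Suc 2) (\<lambda>xs. \<exists>c<xs ! 0. xs ! 2 \<le> c \<and> admissible (xs ! 1) (xs ! 0) c)"
    by simp
  from computable_fn_Least[OF this] show ?thesis
    by (rule computable_fn_cong) (use admissible_exists in \<open>auto simp: search_bound_def\<close>)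
qed

lemma computable_next_elem: "computable_fn 2 (\<lambda>xs. next_elem (xs ! 0) (xs ! 1))"
proof -
  have "decidable_pred 3 (\<lambda>xs. admissible (xs ! 1) (search_bound (xs ! 1) (xs ! 2)) (xs ! 0))"
    using decidable_pred_comp[OF decidable_admissible,
        of "[\<lambda>xs. xs ! 1, \<lambda>xs. search_bound (xs ! 1) (xs ! 2), \<lambda>xs. xs ! 0]" 3]
      computable_fn_reindex[OF computable_search_bound, of "[1, 2]" 3]
    by (simp add: computable_fn_proj)
  then have "decidable_pred (Suc 2)
      (\<lambda>xs. xs ! 2 \<le> xs ! 0 \<and> admissible (xs ! 1) (search_bound (xs ! 1) (xs ! 2)) (xs ! 0))"
    using decidable_conj[OF decidable_le[OF computable_fn_proj[of 2 3, simplified] computable_fn_proj[of 0 3, simplified]]]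
    by simp
  from computable_fn_Least[OF this] show ?thesis
    by (rule computable_fn_cong) (use next_elem_admissible in \<open>auto simp: next_elem_def\<close>)
qed

lemma computable_diag_seq: "computable_fn 1 (\<lambda>xs. diag_seq (xs ! 0))"
proof -
  let ?F = "\<lambda>ys::nat list. next_elem 0 0"
  let ?G = "\<lambda>ys::nat list. next_elem (Suc (ys ! 0)) (Suc (ys ! 1))"
  have "computable_fn 0 ?F"
    using computable_fn_comp2[OF computable_next_elem computable_fn_zero computable_fn_zero] by simp
  moreover have "computable_fn 2 ?G"
    using computable_fn_comp2[OF computable_next_elem computable_fn_Suc[OF computable_fn_proj[of 0 2, simplified]]
        computable_fn_Suc[OF computable_fn_proj[of 1 2, simplified]]] by simp
  ultimately have R: "computable_fn 1 (\<lambda>xs. prim_rec ?F ?G (hd xs) (tl xs))"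
    using computable_fn_prim_rec[of 0 ?F ?G] by (simp add: numeral_2_eq_2)
  have "prim_rec ?F ?G k ys = diag_seq k" for k ys by (induction k) auto
  then show ?thesis by (intro computable_fn_cong[OF R]) (auto simp: length_Suc_conv)
qed

lemma recursive_range_diag_seq: "recursive_set (range diag_seq)"
proof -
  have "decidable_pred (Suc 1) (\<lambda>xs. diag_seq (xs ! 0) = xs ! 1)"
    using decidable_eq[OF computable_fn_comp1[OF computable_diag_seq computable_fn_proj[of 0 2, simplified]]
        computable_fn_proj[of 1 2, simplified]] by (simp add: numeral_2_eq_2)
  from decidable_ex_less[OF this computable_fn_Suc[OF computable_fn_proj[OF zero_less_one]]]
  have "decidable_pred 1 (\<lambda>xs. \<exists>k<Suc (xs ! 0). diag_seq k = xs ! 0)"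
    by (rule decidable_pred_cong) simp
  moreover have "(\<exists>k<Suc c. diag_seq k = c) \<longleftrightarrow> c \<in> range diag_seq" for c
    using strict_mono_imp_increasing[OF strict_mono_diag_seq] by (auto simp: less_Suc_eq_le)
  ultimately show ?thesis unfolding recursive_set_iff_decidable by (rule decidable_pred_cong)
qed

theorem recursive_infinite_subset:
  "\<exists>S\<subseteq>SA. infinite S \<and> recursive_set S \<and> (\<forall>j. slice SW j \<inter> SC = {} \<longrightarrow> finite (S \<inter> slice SW j))"
proof (intro exI conjI allI impI)
  show "range diag_seq \<subseteq> SA" using diag_seq_in by blast
  show "infinite (range diag_seq)"
    using strict_mono_diag_seq by (simp add: strict_mono_imp_inj_on finite_image_iff)
  show "recursive_set (range diag_seq)" by (rule recursive_range_diag_seq)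
  fix j assume disjoint: "slice SW j \<inter> SC = {}"
  have "range diag_seq \<inter> slice SW j \<subseteq> diag_seq ` {..<j}"
  proof
    fix c assume "c \<in> range diag_seq \<inter> slice SW j"
    then obtain k where k: "c = diag_seq k" "diag_seq k \<in> slice SW j" by blast
    then have "k < j" using diag_seq_avoids[OF disjoint] by (meson not_less)
    with k show "c \<in> diag_seq ` {..<j}" by blast
  qed
  then show "finite (range diag_seq \<inter> slice SW j)" by (rule finite_subset) simp
qed

end

section \<open>Transfer to languages\<close>

lemma inj_on_wcode:
  assumes "finite X"
  shows "inj_on (wcode X) (lists X)"
proof -
  obtain h where "bij_betw h X {0..<card X}" using ex_bij_betw_finite_nat[OF assms] by blast
  then have "\<exists>e. bij_betw e X {..<card X}" by (auto simp: atLeast0LessThan)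
  then have "bij_betw (alph_enum X) X {..<card X}" unfolding alph_enum_def by (rule someI_ex)
  then have inj_enum: "inj_on (alph_enum X) X" by (rule bij_betw_imp_inj_on)
  show ?thesis
  proof (rule inj_onI)
    fix x y assume x: "x \<in> lists X" and y: "y \<in> lists X" and "wcode X x = wcode X y"
    then have "map (alph_enum X) x = map (alph_enum X) y" unfolding wcode_def by (simp add: list_encode_eq)
    moreover have "inj_on (alph_enum X) (set x \<union> set y)" using inj_enum x y by (auto intro: inj_on_subset)
    ultimately show "x = y" using inj_on_map_eq_map by blast
  qed
qed

lemma recursive_sublanguage_almost_avoiding:
  fixes e :: "nat \<Rightarrow> 'a list set"
  assumes "finite X"
    and e_lists: "\<And>j. e j \<subseteq> lists X"
    and recursive_e: "recursive_set {prod_encode (j, wcode X w) | j w. w \<in> lists X \<and> w \<in> e j}"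
    and A_lists: "A \<subseteq> lists X" and C_lists: "C \<subseteq> lists X"
    and recursive_A: "recursive_lang X A" and recursive_C: "recursive_lang X C"
    and outside: "\<And>n. infinite (A - \<Union> (e ` {j. j \<le> n \<and> e j \<inter> C = {}}))"
  shows "\<exists>B\<subseteq>A. infinite B \<and> recursive_lang X B \<and> (\<forall>j. e j \<inter> C = {} \<longrightarrow> finite (B \<inter> e j))"
proof -
  define SW where "SW = {prod_encode (j, wcode X w) | j w. w \<in> lists X \<and> w \<in> e j}"
  have inj: "inj_on (wcode X) (lists X)" using \<open>finite X\<close> by (rule inj_on_wcode)
  have slice_eq: "slice SW j = wcode X ` e j" for j
    using e_lists by (auto simp: SW_def slice_def prod_encode_eq)
  have image_Int: "wcode X ` (e j \<inter> D) = wcode X ` e j \<inter> wcode X ` D" if "D \<subseteq> lists X" for j D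
    using inj e_lists that by (intro inj_on_image_Int) auto
  have disjoint_iff: "slice SW j \<inter> wcode X ` C = {} \<longleftrightarrow> e j \<inter> C = {}" for j
    using image_Int[OF C_lists, of j] by (auto simp: slice_eq)
  interpret diagonal_subset "wcode X ` A" "wcode X ` C" SW
  proof
    show "recursive_set (wcode X ` A)" using recursive_A unfolding recursive_lang_def .
    show "recursive_set (wcode X ` C)" using recursive_C unfolding recursive_lang_def .
    show "recursive_set SW" using recursive_e unfolding SW_def .
    fix n
    let ?E = "\<Union> (e ` {j. j \<le> n \<and> e j \<inter> C = {}})"
    have "{j. j \<le> n \<and> slice SW j \<inter> wcode X ` C = {}} = {j. j \<le> n \<and> e j \<inter> C = {}}"
      using disjoint_iff by blast
    then have "\<Union> (slice SW ` {j. j \<le> n \<and> slice SW j \<inter> wcode X ` C = {}}) = wcode X ` ?E"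
      by (simp add: slice_eq image_UN)
    moreover have "wcode X ` (A - ?E) = wcode X ` A - wcode X ` ?E"
      using A_lists e_lists by (intro inj_on_image_set_diff[OF inj]) auto
    ultimately have "wcode X ` A - \<Union> (slice SW ` {j. j \<le> n \<and> slice SW j \<inter> wcode X ` C = {}})
        = wcode X ` (A - ?E)"
      by simp
    moreover have "inj_on (wcode X) (A - ?E)" using inj A_lists by (auto intro: inj_on_subset)
    ultimately show "infinite (wcode X ` A - \<Union> (slice SW ` {j. j \<le> n \<and> slice SW j \<inter> wcode X ` C = {}}))"
      using outside[of n] by (simp add: finite_image_iff)
  qed
  obtain S where S: "S \<subseteq> wcode X ` A" "infinite S" "recursive_set S"
    and S_finite: "\<forall>j. slice SW j \<inter> wcode X ` C = {} \<longrightarrow> finite (S \<inter> slice SW j)"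
    using recursive_infinite_subset by blast
  define B where "B = {w \<in> A. wcode X w \<in> S}"
  have image_B: "wcode X ` B = S" using S(1) by (auto simp: B_def)
  have B_lists: "B \<subseteq> lists X" using A_lists by (auto simp: B_def)
  show ?thesis
  proof (intro exI conjI allI impI)
    show "B \<subseteq> A" by (auto simp: B_def)
    show "infinite B" using S(2) image_B by auto
    show "recursive_lang X B" unfolding recursive_lang_def image_B by (rule S(3))
    fix j assume "e j \<inter> C = {}"
    then have "finite (slice SW j \<inter> S)" using S_finite disjoint_iff by (simp add: Int_commute)
    moreover have "wcode X ` (e j \<inter> B) = slice SW j \<inter> S"
      using image_Int[OF B_lists, of j] by (simp add: slice_eq image_B)
    ultimately have "finite (wcode X ` (e j \<inter> B))" by simp
    moreover have "inj_on (wcode X) (e j \<inter> B)" using inj B_lists by (auto intro: inj_on_subset)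
    ultimately show "finite (B \<inter> e j)" by (simp add: finite_image_iff Int_commute)
  qed
qed

section \<open>Classification problems\<close>

lemma Union_mem_family:
  assumes "{} \<in> L" and "\<forall>Q\<in>L. \<forall>R\<in>L. Q \<union> R \<in> L" and "finite J" and "\<forall>j\<in>J. e j \<in> L"
  shows "\<Union> (e ` J) \<in> L"
  using assms(3,4) by (induction J rule: finite_induct) (use assms(1,2) in auto)

lemma cond_class_problem_nth:
  "cond_class_problem X C A \<Longrightarrow> i < length A \<Longrightarrow> cond_class_problem X C [A ! i]"
  unfolding cond_class_problem_def class_problem_def pw_disjoint_def by (simp add: less_one)

lemma cond_class_problem_shrink:
  assumes "cond_class_problem X C A" and "length B = length A"
    and "\<forall>i<length A. B ! i \<subseteq> A ! i \<and> infinite (B ! i)"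
  shows "cond_class_problem X C B"
proof -
  have A: "C \<subseteq> lists X" "1 \<le> length A" "pw_disjoint A"
    "\<forall>i<length A. A ! i \<subseteq> lists X \<and> C \<inter> A ! i = {}"
    using assms(1) unfolding cond_class_problem_def class_problem_def by auto
  have B_sub: "B ! i \<subseteq> A ! i" if "i < length B" for i using assms(2,3) that by simp
  have "pw_disjoint B" unfolding pw_disjoint_def
  proof (intro allI impI)
    fix i j assume "i < length B" "j < length B" "i \<noteq> j"
    then have "A ! i \<inter> A ! j = {}" using A(3) assms(2) unfolding pw_disjoint_def by simp
    then show "B ! i \<inter> B ! j = {}" using B_sub \<open>i < length B\<close> \<open>j < length B\<close> by blast
  qed
  moreover have "B ! i \<subseteq> lists X \<and> C \<inter> B ! i = {} \<and> infinite (B ! i)" if "i < length B" for i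
  proof -
    have "A ! i \<subseteq> lists X" "C \<inter> A ! i = {}" "infinite (B ! i)" using A(4) assms(2,3) that by auto
    then show ?thesis using B_sub[OF that] by blast
  qed
  ultimately show ?thesis using A(1,2) assms(2) unfolding cond_class_problem_def class_problem_def by simp
qed

lemma vec_le_pointwise:
  assumes "length B = length A" "1 \<le> length A" "\<forall>i<length A. B ! i \<subseteq> A ! i"
  shows "vec_le B A"
  unfolding vec_le_def
proof (intro conjI exI[of _ id])
  show "inj_on id {..<length B}" by simp
  show "id ` {..<length B} \<subseteq> {..<length A}" using assms(1) by simp
  show "\<forall>i<length B. B ! i \<subseteq> A ! id i" using assms(1,3) by simp
qed (use assms(1,2) in simp_all)

lemma vec_le_nth_0:
  assumes "vec_le B A"
  shows "\<exists>i<length A. B ! 0 \<subseteq> A ! i"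
proof -
  obtain \<sigma> where \<sigma>: "\<sigma> ` {..<length B} \<subseteq> {..<length A}" "\<forall>i<length B. B ! i \<subseteq> A ! \<sigma> i"
    and "1 \<le> length B" using assms unfolding vec_le_def by blast
  from \<open>1 \<le> length B\<close> have "0 < length B" by linarith
  then have "\<sigma> 0 < length A" "B ! 0 \<subseteq> A ! \<sigma> 0" using \<sigma> by auto
  then show ?thesis by blast
qed

lemma infinite_diff_if_not_cclass1:
  assumes nontrivial: "nontrivial X L" and L_lists: "L \<subseteq> Pow (lists X)"
    and complement: "\<forall>Q\<in>L. lists X - Q \<in> L"
    and problem: "cond_class_problem X C [A]" and not_class: "[A] \<notin> cclass X L 1 C"
    and "Q \<in> L" and "Q \<inter> C = {}"
  shows "infinite (A - Q)"
proof
  assume "finite (A - Q)"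
  have A: "A \<subseteq> lists X" "C \<inter> A = {}" "C \<subseteq> lists X"
    using problem unfolding cond_class_problem_def class_problem_def by auto
  define Q1 where "Q1 = Q \<union> (A - Q)"
  have "Q1 \<in> L"
    using nontrivial \<open>Q \<in> L\<close> \<open>finite (A - Q)\<close> A unfolding nontrivial_def Q1_def by blast
  then have "L_partition X L [lists X - Q1, Q1]"
    using complement L_lists unfolding L_partition_def pw_disjoint_def
    by (auto simp: less_Suc_eq nth_Cons')
  moreover have "C \<subseteq> lists X - Q1" using A \<open>Q \<inter> C = {}\<close> by (auto simp: Q1_def)
  moreover have "vec_le [A] [Q1]" by (rule vec_le_pointwise) (auto simp: Q1_def)
  ultimately have "[A] \<in> cclass X L 1 C"
    using problem unfolding cclass_def by (intro CollectI conjI exI[of _ "[lists X - Q1, Q1]"]) auto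
  with not_class show False ..
qed

text \<open>An infinite class of a smaller problem lies in some block \<open>Q\<^sub>j\<close>, \<open>j \<ge> 1\<close>, of the partition;
  that block is disjoint from \<open>Q\<^sub>0 \<supseteq> C\<close>, so it meets every \<open>B\<^sub>i\<close> in a finite set only.\<close>

lemma in_ccore_if_almost_disjoint:
  assumes problem: "cond_class_problem X C B"
    and almost_disjoint: "\<forall>i<length B. \<forall>Q\<in>L. Q \<inter> C = {} \<longrightarrow> finite (B ! i \<inter> Q)"
  shows "B \<in> ccore X L (length B) C"
  unfolding ccore_def
proof (intro CollectI conjI allI impI notI)
  show "length B = length B" by (rule refl)
  show "cond_class_problem X C B" by (rule problem)
  fix B' assume B': "class_problem X B' \<and> vec_le B' B" and "B' \<in> cclass X L (length B') C"
  then obtain Q where partition: "L_partition X L Q" and "C \<subseteq> Q ! 0" and "vec_le B' (tl Q)"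
    unfolding cclass_def by blast
  obtain i where i: "i < length B" "B' ! 0 \<subseteq> B ! i" using B' vec_le_nth_0 by blast
  obtain j where j: "j < length (tl Q)" "B' ! 0 \<subseteq> tl Q ! j"
    using \<open>vec_le B' (tl Q)\<close> vec_le_nth_0 by blast
  have "Suc j < length Q" using j(1) by simp
  then have "Q ! Suc j \<in> L" using partition unfolding L_partition_def by blast
  moreover have "pw_disjoint Q" using partition unfolding L_partition_def by blast
  then have "Q ! Suc j \<inter> Q ! 0 = {}"
    using \<open>Suc j < length Q\<close> unfolding pw_disjoint_def by (metis Suc_neq_Zero zero_less_Suc order.strict_trans)
  ultimately have "finite (B ! i \<inter> Q ! Suc j)"
    using almost_disjoint i(1) \<open>C \<subseteq> Q ! 0\<close> by blast
  moreover have "B' ! 0 \<subseteq> B ! i \<inter> Q ! Suc j" using i(2) j by (simp add: nth_tl)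
  moreover have "infinite (B' ! 0)" using B' unfolding class_problem_def by (auto simp: Suc_le_eq)
  ultimately show False using finite_subset by blast
qed

lemma recursive_subset_almost_avoiding_family:
  fixes e :: "nat \<Rightarrow> 'a list set"
  assumes "finite X" and nontrivial: "nontrivial X L" and L_lists: "L \<subseteq> Pow (lists X)"
    and union: "\<forall>Q\<in>L. \<forall>R\<in>L. Q \<union> R \<in> L" and complement: "\<forall>Q\<in>L. lists X - Q \<in> L"
    and range_e: "range e = L"
    and recursive_e: "recursive_set {prod_encode (j, wcode X w) | j w. w \<in> lists X \<and> w \<in> e j}"
    and problem: "cond_class_problem X C [A]"
    and "recursive_lang X C" and "recursive_lang X A" and not_class: "[A] \<notin> cclass X L 1 C"
  shows "\<exists>B\<subseteq>A. infinite B \<and> recursive_lang X B \<and> (\<forall>Q\<in>L. Q \<inter> C = {} \<longrightarrow> finite (B \<inter> Q))"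
proof -
  have e_lists: "e j \<subseteq> lists X" for j using range_e L_lists by blast
  have "C \<subseteq> lists X" "A \<subseteq> lists X"
    using problem unfolding cond_class_problem_def class_problem_def by auto
  have "{} \<in> L" using nontrivial unfolding nontrivial_def by blast
  have "infinite (A - \<Union> (e ` {j. j \<le> n \<and> e j \<inter> C = {}}))" for n
  proof (rule infinite_diff_if_not_cclass1[OF nontrivial L_lists complement problem not_class])
    show "\<Union> (e ` {j. j \<le> n \<and> e j \<inter> C = {}}) \<in> L"
      using \<open>{} \<in> L\<close> union range_e by (intro Union_mem_family) auto
  qed blast
  then obtain B where "B \<subseteq> A" "infinite B" "recursive_lang X B"
    and "\<forall>j. e j \<inter> C = {} \<longrightarrow> finite (B \<inter> e j)"
    using recursive_sublanguage_almost_avoiding[OF \<open>finite X\<close> e_lists recursive_e \<open>A \<subseteq> lists X\<close>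
        \<open>C \<subseteq> lists X\<close> \<open>recursive_lang X A\<close> \<open>recursive_lang X C\<close>] by blast
  with range_e show ?thesis by blast
qed

theorem theorem5p4:
  fixes X :: "'a set" and L :: "'a list set set" and C :: "'a list set" and A :: "'a list set list"
  assumes "finite X" and "X \<noteq> {}"
    and "L \<subseteq> Pow (lists X)"
    and "nontrivial X L" and "WP_recursive X L"
    and "\<forall>Q\<in>L. \<forall>R\<in>L. Q \<union> R \<in> L"
    and "\<forall>Q\<in>L. \<forall>R\<in>L. Q \<inter> R \<in> L"
    and "\<forall>Q\<in>L. lists X - Q \<in> L"
    and "cond_class_problem X C A"
    and "recursive_lang X C"
    and "\<forall>i<length A. recursive_lang X (A ! i) \<and> [A ! i] \<notin> cclass X L 1 C"
  shows "\<exists>B. length B = length A \<and> vec_le B A \<and> B \<in> ccore X L (length A) C \<and>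
           (\<forall>i<length B. recursive_lang X (B ! i))"
proof -
  obtain e :: "nat \<Rightarrow> 'a list set" where range_e: "range e = L"
    and recursive_e: "recursive_set {prod_encode (j, wcode X w) | j w. w \<in> lists X \<and> w \<in> e j}"
    using \<open>WP_recursive X L\<close> unfolding WP_recursive_def by blast
  have "\<exists>Bi\<subseteq>A ! i. infinite Bi \<and> recursive_lang X Bi \<and> (\<forall>Q\<in>L. Q \<inter> C = {} \<longrightarrow> finite (Bi \<inter> Q))"
    if "i < length A" for i
    using recursive_subset_almost_avoiding_family[OF assms(1,4,3,6,8) range_e recursive_e
        cond_class_problem_nth[OF assms(9) that] assms(10)] assms(11) that by blast
  then obtain Bf where Bf: "\<And>i. i < length A \<Longrightarrow> Bf i \<subseteq> A ! i \<and> infinite (Bf i) \<and>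
      recursive_lang X (Bf i) \<and> (\<forall>Q\<in>L. Q \<inter> C = {} \<longrightarrow> finite (Bf i \<inter> Q))"
    by metis
  define B where "B = map Bf [0..<length A]"
  have "cond_class_problem X C B"
    using \<open>cond_class_problem X C A\<close> by (rule cond_class_problem_shrink) (simp_all add: B_def Bf)
  then have "B \<in> ccore X L (length B) C"
    by (rule in_ccore_if_almost_disjoint) (simp add: B_def Bf)
  moreover have "vec_le B A"
    using \<open>cond_class_problem X C A\<close> Bf
    by (intro vec_le_pointwise) (auto simp: B_def cond_class_problem_def class_problem_def)
  moreover have "\<forall>i<length B. recursive_lang X (B ! i)" using Bf by (simp add: B_def)
  moreover have "length B = length A" by (simp add: B_def)
  ultimately show ?thesis by metis
qed

end
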